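(* Let $F(z)=\sum_{n=0}^{\infty}c_nz^n$ be analytic on the unit disc $\mathbb{D}$ with real coefficients $c_n$. Let $U(z)=\Re e\,F(z)$ and suppose $U$ has $L^{1}_{loc}$-boundary behavior on $\partial\mathbb{D}\setminus\{1\}$. Assume there is $\theta_0\in(0,\pi)$ such that one of the following holds: (b.1) there is $c\geq0$ such that $U(re^{i\theta})\geq -c$ for $\theta\in(-\theta_0,\theta_0)$ and $r\in[0,1)$; (b.2) $\sup_{0<r<1}\int_{-\theta_0}^{\theta_0}|U(re^{i\theta})|\,\mathrm{d}\theta<\infty$; (b.3) there are $g\in L^{1}(-\theta_0,\theta_0)$ and $k\in\mathbb{N}$ such that $U(re^{i\theta})=O((1-r)^{-k})$ for $\theta\in(-\theta_0,\theta_0)$, $r\in[0,1)$, and $U(re^{i\theta})\geq g(\theta)$ for a.e. $\theta\in(-\theta_0,\theta_0)$ and all $r\in[0,1)$. Then the sequence $\{c_n\}_{n=0}^\infty$ converges, and $\lim_{n\to\infty}c_n=\lim_{r\to1^{-}}(1-r)U(r)$.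
   Context: $U$ has $L^{1}_{loc}$-boundary behavior on $\partial\mathbb{D}\setminus\{1\}$ means: there is $f\in L^{1}_{loc}(0,2\pi)$ such that for every compact interval $J\subset(0,2\pi)$, $\lim_{r\to1^{-}}\int_J|U(re^{i\theta})-f(\theta)|\,\mathrm{d}\theta=0$. *)

theory Defs
  imports "HOL-Analysis.Analysis"
begin

definition psF :: "(nat \<Rightarrow> real) \<Rightarrow> complex \<Rightarrow> complex" where
  "psF c z = (\<Sum>n. complex_of_real (c n) * z ^ n)"

definition psU :: "(nat \<Rightarrow> real) \<Rightarrow> complex \<Rightarrow> real" where
  "psU c z = Re (psF c z)"

definition L1loc_boundary :: "(complex \<Rightarrow> real) \<Rightarrow> bool" where
  "L1loc_boundary U \<longleftrightarrow>
     (\<exists>f :: real \<Rightarrow> real.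
        (\<forall>a b. 0 < a \<longrightarrow> b < 2 * pi \<longrightarrow> f absolutely_integrable_on {a..b}) \<and>
        (\<forall>a b. 0 < a \<longrightarrow> a \<le> b \<longrightarrow> b < 2 * pi \<longrightarrow>
           ((\<lambda>r. integral {a..b} (\<lambda>\<theta>. \<bar>U (complex_of_real r * cis \<theta>) - f \<theta>\<bar>))
              \<longlongrightarrow> 0) (at_left 1)))"

end

theory Submission
  imports Defs
begin

text \<open>
  Write \<open>u\<^sub>r(\<theta>) = U(r e\<^sup>i\<^sup>\<theta>) = \<Sum>\<^sub>k c\<^sub>k r\<^sup>k cos k\<theta>\<close>, so that
  \<open>\<integral>\<^sub>0\<^sup>2\<^sup>\<pi> u\<^sub>r(\<theta>) cos n\<theta> d\<theta> = \<pi> c\<^sub>n r\<^sup>n\<close> for \<open>n \<ge> 1\<close>, and let \<open>f\<close> be the boundary function.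
  Away from \<open>\<theta> = 0\<close>, \<open>u\<^sub>r \<rightarrow> f\<close> in \<open>L\<^sup>1\<close>; near \<open>\<theta> = 0\<close> each of (b.1)--(b.3) bounds \<open>\<integral>|u\<^sub>r|\<close>
  (a one-sided bound \<open>g \<le> u\<^sub>r\<close> suffices, since \<open>|u\<^sub>r| \<le> u\<^sub>r + 2|g|\<close> and \<open>\<integral>\<^sub>0\<^sup>2\<^sup>\<pi> u\<^sub>r = 2\<pi>c\<^sub>0\<close>).
  Hence \<open>\<integral>\<^sub>0\<^sup>2\<^sup>\<pi> |u\<^sub>r|\<close> stays bounded as \<open>r \<rightarrow> 1\<close> and \<open>f \<in> L\<^sup>1(0, 2\<pi>)\<close>. The difference \<open>u\<^sub>r - f\<close>
  can only concentrate at \<open>\<theta> = 0\<close>, where \<open>cos n\<theta> - cos m\<theta>\<close> vanishes to second order; integrating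
  against this weight and letting \<open>r \<rightarrow> 1\<close> gives \<open>\<pi>(c\<^sub>n - c\<^sub>m) = F(n) - F(m)\<close>, where
  \<open>F(n) = \<integral>\<^sub>0\<^sup>2\<^sup>\<pi> f(\<theta>) cos n\<theta> d\<theta>\<close>. By the Riemann--Lebesgue lemma \<open>F(n) \<rightarrow> 0\<close>, so \<open>c\<^sub>n\<close>
  converges, and then so does its Abel mean \<open>(1 - r) U(r) = (1 - r) \<Sum>\<^sub>n c\<^sub>n r\<^sup>n\<close>, to the same
  limit.
\<close>

section \<open>Integrals of real functions on intervals\<close>

lemma absolutely_integrable_on_imp_integrable_on:
  fixes f :: "'a::euclidean_space \<Rightarrow> real"
  shows "f absolutely_integrable_on S \<Longrightarrow> f integrable_on S"
  by (simp add: absolutely_integrable_on_def)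

lemma absolutely_integrable_on_imp_abs_integrable_on:
  fixes f :: "'a::euclidean_space \<Rightarrow> real"
  shows "f absolutely_integrable_on S \<Longrightarrow> (\<lambda>x. \<bar>f x\<bar>) integrable_on S"
  by (simp add: absolutely_integrable_on_def)

lemma absolutely_integrable_on_abs:
  fixes f :: "'a::euclidean_space \<Rightarrow> real"
  shows "f absolutely_integrable_on S \<Longrightarrow> (\<lambda>x. \<bar>f x\<bar>) absolutely_integrable_on S"
  using absolutely_integrable_norm[where f=f and S=S] by (simp add: o_def)

lemma absolutely_integrable_mult_continuous:
  fixes g h :: "real \<Rightarrow> real"
  assumes "g absolutely_integrable_on {a..b}" "continuous_on {a..b} h"
  shows "(\<lambda>x. g x * h x) absolutely_integrable_on {a..b}"
proof -
  have "(\<lambda>x. h x * g x) absolutely_integrable_on {a..b}"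
  proof (rule absolutely_integrable_bounded_measurable_product_real)
    show "h \<in> borel_measurable (lebesgue_on {a..b})"
      using assms(2) by (intro continuous_imp_measurable_on_sets_lebesgue) auto
    show "bounded (h ` {a..b})"
      using assms(2) by (intro compact_imp_bounded compact_continuous_image) auto
  qed (use assms(1) in auto)
  then show ?thesis by (simp add: mult.commute)
qed

lemma abs_integral_mult_le:
  fixes g h :: "real \<Rightarrow> real"
  assumes g: "g absolutely_integrable_on {a..b}" and h: "continuous_on {a..b} h"
    and hB: "\<And>x. x \<in> {a..b} \<Longrightarrow> \<bar>h x\<bar> \<le> B"
  shows "\<bar>integral {a..b} (\<lambda>x. g x * h x)\<bar> \<le> B * integral {a..b} (\<lambda>x. \<bar>g x\<bar>)"
proof -
  have "norm (integral {a..b} (\<lambda>x. g x * h x)) \<le> integral {a..b} (\<lambda>x. B * \<bar>g x\<bar>)"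
  proof (rule integral_norm_bound_integral)
    show "(\<lambda>x. g x * h x) integrable_on {a..b}"
      by (intro absolutely_integrable_on_imp_integrable_on absolutely_integrable_mult_continuous g h)
    show "(\<lambda>x. B * \<bar>g x\<bar>) integrable_on {a..b}"
      by (intro integrable_on_mult_right absolutely_integrable_on_imp_abs_integrable_on g)
    show "norm (g x * h x) \<le> B * \<bar>g x\<bar>" if "x \<in> {a..b}" for x
      using mult_left_mono[OF hB[OF that], of "\<bar>g x\<bar>"] by (simp add: abs_mult mult.commute)
  qed
  then show ?thesis by simp
qed

lemma integral_combine3:
  fixes f :: "real \<Rightarrow> real"
  assumes "f integrable_on {a..d}" "a \<le> b" "b \<le> c" "c \<le> d"
  shows "integral {a..d} f = integral {a..b} f + integral {b..c} f + integral {c..d} f"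
proof -
  have "f integrable_on {a..c}"
    by (rule integrable_on_subinterval[OF assms(1)]) (use assms in auto)
  then have "integral {a..b} f + integral {b..c} f = integral {a..c} f"
    by (rule Henstock_Kurzweil_Integration.integral_combine[rotated 2]) (use assms in auto)
  moreover have "integral {a..c} f + integral {c..d} f = integral {a..d} f"
    by (rule Henstock_Kurzweil_Integration.integral_combine[OF _ _ assms(1)]) (use assms in auto)
  ultimately show ?thesis by simp
qed

lemma abs_integral_mult_le_split:
  fixes g h :: "real \<Rightarrow> real"
  assumes g: "g absolutely_integrable_on {a..d}" and h: "continuous_on {a..d} h"
    and abcd: "a \<le> b" "b \<le> c" "c \<le> d"
    and small: "\<And>x. x \<in> {a..b} \<union> {c..d} \<Longrightarrow> \<bar>h x\<bar> \<le> \<epsilon>" and "0 \<le> \<epsilon>"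
    and bounded: "\<And>x. x \<in> {b..c} \<Longrightarrow> \<bar>h x\<bar> \<le> B"
  shows "\<bar>integral {a..d} (\<lambda>x. g x * h x)\<bar>
           \<le> \<epsilon> * integral {a..d} (\<lambda>x. \<bar>g x\<bar>) + B * integral {b..c} (\<lambda>x. \<bar>g x\<bar>)"
proof -
  have g': "g absolutely_integrable_on {s..t}" if "a \<le> s" "t \<le> d" for s t
    by (rule set_integrable_subset[OF g]) (use that in auto)
  have h': "continuous_on {s..t} h" if "a \<le> s" "t \<le> d" for s t
    by (rule continuous_on_subset[OF h]) (use that in auto)
  let ?G = "\<lambda>s t. integral {s..t} (\<lambda>x. \<bar>g x\<bar>)"
  let ?I = "\<lambda>s t. integral {s..t} (\<lambda>x. g x * h x)"
  have "?I a d = ?I a b + ?I b c + ?I c d"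
    by (intro integral_combine3 absolutely_integrable_on_imp_integrable_on
        absolutely_integrable_mult_continuous g h abcd)
  then have "\<bar>?I a d\<bar> \<le> \<bar>?I a b\<bar> + \<bar>?I c d\<bar> + \<bar>?I b c\<bar>"
    by linarith
  also have "\<dots> \<le> \<epsilon> * ?G a b + \<epsilon> * ?G c d + B * ?G b c"
    using abcd by (intro add_mono abs_integral_mult_le g' h' small bounded) auto
  also have "\<epsilon> * ?G a b + \<epsilon> * ?G c d \<le> \<epsilon> * ?G a d"
  proof -
    have "?G a d = ?G a b + ?G b c + ?G c d"
      by (intro integral_combine3 absolutely_integrable_on_imp_abs_integrable_on g abcd)
    moreover have "0 \<le> ?G b c"
      using abcd by (intro integral_nonneg absolutely_integrable_on_imp_abs_integrable_on g') auto
    ultimately show ?thesis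
      using \<open>0 \<le> \<epsilon>\<close> by (simp add: distrib_left)
  qed
  finally show ?thesis by simp
qed

lemma integral_periodic_split:
  fixes v :: "real \<Rightarrow> real"
  assumes v: "v integrable_on {-e..T}" and periodic: "\<And>x. v (T + x) = v x"
    and e: "0 \<le> e" "e \<le> T - e"
  shows "integral {0..T} v = integral {-e..e} v + integral {e..T-e} v"
proof -
  have "integral {0..T} v = integral {0..e} v + integral {e..T-e} v + integral {T-e..T} v"
    using e by (intro integral_combine3 integrable_on_subinterval[OF v]) auto
  moreover have "integral {T-e..T} v = integral {-e..0} v"
    using integral_shift_Icc_real[of "-e" 0 v T] periodic by (simp add: o_def algebra_simps)
  moreover have "integral {-e..0} v + integral {0..e} v = integral {-e..e} v"
    using e by (intro Henstock_Kurzweil_Integration.integral_combine integrable_on_subinterval[OF v]) auto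
  ultimately show ?thesis by simp
qed

lemma L1_tendsto_imp_tendsto_integral:
  fixes U :: "'a \<Rightarrow> real \<Rightarrow> real" and f :: "real \<Rightarrow> real"
  assumes lim: "((\<lambda>r. integral {a..b} (\<lambda>x. \<bar>U r x - f x\<bar>)) \<longlongrightarrow> 0) F"
    and f: "f absolutely_integrable_on {a..b}"
    and U: "eventually (\<lambda>r. U r absolutely_integrable_on {a..b}) F"
  shows "((\<lambda>r. integral {a..b} (U r)) \<longlongrightarrow> integral {a..b} f) F"
    and "((\<lambda>r. integral {a..b} (\<lambda>x. \<bar>U r x\<bar>)) \<longlongrightarrow> integral {a..b} (\<lambda>x. \<bar>f x\<bar>)) F"
proof -
  have bounds: "\<bar>integral {a..b} (U r) - integral {a..b} f\<bar> \<le> integral {a..b} (\<lambda>x. \<bar>U r x - f x\<bar>) \<and>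
      \<bar>integral {a..b} (\<lambda>x. \<bar>U r x\<bar>) - integral {a..b} (\<lambda>x. \<bar>f x\<bar>)\<bar>
        \<le> integral {a..b} (\<lambda>x. \<bar>U r x - f x\<bar>)"
    if Ur: "U r absolutely_integrable_on {a..b}" for r
  proof -
    have Uf: "(\<lambda>x. U r x - f x) absolutely_integrable_on {a..b}"
      by (rule set_integral_diff(1)[OF Ur f])
    have "integral {a..b} (U r) - integral {a..b} f = integral {a..b} (\<lambda>x. U r x - f x)"
      by (intro integral_diff[symmetric] absolutely_integrable_on_imp_integrable_on Ur f)
    moreover have "\<bar>integral {a..b} (\<lambda>x. U r x - f x)\<bar> \<le> integral {a..b} (\<lambda>x. \<bar>U r x - f x\<bar>)"
      using integral_norm_bound_integral[OF absolutely_integrable_on_imp_integrable_on[OF Uf]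
          absolutely_integrable_on_imp_abs_integrable_on[OF Uf]] by simp
    moreover have "integral {a..b} (\<lambda>x. \<bar>U r x\<bar>) - integral {a..b} (\<lambda>x. \<bar>f x\<bar>)
        = integral {a..b} (\<lambda>x. \<bar>U r x\<bar> - \<bar>f x\<bar>)"
      by (intro integral_diff[symmetric] absolutely_integrable_on_imp_abs_integrable_on Ur f)
    moreover have "\<bar>integral {a..b} (\<lambda>x. \<bar>U r x\<bar> - \<bar>f x\<bar>)\<bar> \<le> integral {a..b} (\<lambda>x. \<bar>U r x - f x\<bar>)"
    proof -
      have "(\<lambda>x. \<bar>U r x\<bar> - \<bar>f x\<bar>) integrable_on {a..b}"
        by (intro integrable_diff absolutely_integrable_on_imp_abs_integrable_on Ur f)
      from integral_norm_bound_integral[OF this absolutely_integrable_on_imp_abs_integrable_on[OF Uf]]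
      show ?thesis by (simp add: abs_triangle_ineq3)
    qed
    ultimately show ?thesis by simp
  qed
  show "((\<lambda>r. integral {a..b} (U r)) \<longlongrightarrow> integral {a..b} f) F"
    by (rule LIM_zero_cancel, rule Lim_null_comparison[OF eventually_mono[OF U] lim])
       (use bounds in simp)
  show "((\<lambda>r. integral {a..b} (\<lambda>x. \<bar>U r x\<bar>)) \<longlongrightarrow> integral {a..b} (\<lambda>x. \<bar>f x\<bar>)) F"
    by (rule LIM_zero_cancel, rule Lim_null_comparison[OF eventually_mono[OF U] lim])
       (use bounds in simp)
qed

lemma integral_abs_le_if_lower_bound:
  fixes v g :: "real \<Rightarrow> real"
  assumes v: "v absolutely_integrable_on {a..b}" and g: "g absolutely_integrable_on {a..b}"
    and N: "negligible N" and lower: "\<And>x. x \<in> {a..b} - N \<Longrightarrow> g x \<le> v x"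
  shows "integral {a..b} (\<lambda>x. \<bar>v x\<bar>) \<le> integral {a..b} v + 2 * integral {a..b} (\<lambda>x. \<bar>g x\<bar>)"
proof -
  have vg: "(\<lambda>x. v x + 2 * \<bar>g x\<bar>) absolutely_integrable_on {a..b}"
    by (intro set_integral_add(1) set_integrable_mult_right absolutely_integrable_on_abs v g)
  define \<psi> where "\<psi> x = max \<bar>v x\<bar> (v x + 2 * \<bar>g x\<bar>)" for x
  have \<psi>: "\<psi> integrable_on {a..b}"
    unfolding \<psi>_def
    by (intro absolutely_integrable_on_imp_integrable_on absolutely_integrable_max_1
        absolutely_integrable_on_abs v vg)
  have "integral {a..b} (\<lambda>x. \<bar>v x\<bar>) \<le> integral {a..b} \<psi>"
    by (rule integral_le[OF absolutely_integrable_on_imp_abs_integrable_on[OF v] \<psi>]) (simp add: \<psi>_def)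
  also have "integral {a..b} \<psi> = integral {a..b} (\<lambda>x. v x + 2 * \<bar>g x\<bar>)"
  proof (rule integral_spike[OF N])
    fix x assume "x \<in> {a..b} - N"
    then show "v x + 2 * \<bar>g x\<bar> = \<psi> x"
      using lower[of x] by (simp add: \<psi>_def)
  qed
  also have "\<dots> = integral {a..b} v + 2 * integral {a..b} (\<lambda>x. \<bar>g x\<bar>)"
    by (simp add: integral_add integrable_on_mult_right absolutely_integrable_on_imp_integrable_on
        absolutely_integrable_on_imp_abs_integrable_on v g)
  finally show ?thesis .
qed

lemma tendsto_L1_truncation:
  fixes f :: "real \<Rightarrow> real"
  assumes f: "f absolutely_integrable_on {a..b}"
  shows "(\<lambda>k. integral {a..b} (\<lambda>x. \<bar>f x - max (- real k) (min (real k) (f x))\<bar>)) \<longlonglongrightarrow> 0"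
proof -
  have ft: "(\<lambda>x. f x - max (- real k) (min (real k) (f x))) absolutely_integrable_on {a..b}" for k
    by (intro set_integral_diff(1) absolutely_integrable_max_1 absolutely_integrable_min_1 f
        absolutely_integrable_continuous_real continuous_on_const)
  have "(\<lambda>k. integral {a..b} (\<lambda>x. \<bar>f x - max (- real k) (min (real k) (f x))\<bar>))
      \<longlonglongrightarrow> integral {a..b} (\<lambda>x. 0)"
  proof (rule dominated_convergence(2))
    show "(\<lambda>x. \<bar>f x - max (- real k) (min (real k) (f x))\<bar>) integrable_on {a..b}" for k
      by (rule absolutely_integrable_on_imp_abs_integrable_on[OF ft])
    show "(\<lambda>x. \<bar>f x\<bar>) integrable_on {a..b}"
      by (rule absolutely_integrable_on_imp_abs_integrable_on[OF f])
    show "norm \<bar>f x - max (- real k) (min (real k) (f x))\<bar> \<le> \<bar>f x\<bar>" for k x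
      by auto
    show "(\<lambda>k. \<bar>f x - max (- real k) (min (real k) (f x))\<bar>) \<longlonglongrightarrow> 0" for x
    proof (rule tendsto_eventually)
      show "eventually (\<lambda>k. \<bar>f x - max (- real k) (min (real k) (f x))\<bar> = 0) sequentially"
        using eventually_ge_at_top[of "nat \<lceil>\<bar>f x\<bar>\<rceil>"] by eventually_elim auto
    qed
  qed
  then show ?thesis
    by simp
qed

lemma Icc_exhaustion:
  fixes s t :: real
  assumes "s < t"
  obtains a b :: "nat \<Rightarrow> real"
  where "\<And>k. s < a k" "\<And>k. a k \<le> b k" "\<And>k. b k < t"
    and "\<And>k. a (Suc k) \<le> a k" "\<And>k. b k \<le> b (Suc k)"
    and "\<And>x. (\<lambda>k. indicator {a k..b k} x :: real) \<longlonglongrightarrow> indicator {s<..<t} x"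
proof -
  define d :: "nat \<Rightarrow> real" where "d = (\<lambda>k. (t - s) / real (k + 3))"
  have d: "0 < d k" "d (Suc k) \<le> d k" for k
    using \<open>s < t\<close> unfolding d_def by (auto intro!: divide_left_mono)
  have "2 * d k = (t - s) * (2 / real (k + 3))" for k
    by (simp add: d_def)
  also have "\<dots> k \<le> (t - s) * 1" for k
    using \<open>s < t\<close> by (intro mult_left_mono) auto
  finally have "s + d k \<le> t - d k" for k
    by (simp add: field_simps)
  moreover have "(\<lambda>k. indicator {s + d k..t - d k} x :: real) \<longlonglongrightarrow> indicator {s<..<t} x" for x
  proof (cases "s < x \<and> x < t")
    case True
    have "d \<longlonglongrightarrow> 0"
      using LIMSEQ_ignore_initial_segment[OF lim_const_over_n[of "t - s"], of 3] by (simp add: d_def)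
    then have "eventually (\<lambda>k. d k < min (x - s) (t - x)) sequentially"
      by (rule order_tendstoD) (use True in auto)
    then have "eventually (\<lambda>k. indicator {s + d k..t - d k} x = (indicator {s<..<t} x :: real)) sequentially"
      by eventually_elim (use True in auto)
    then show ?thesis
      by (rule tendsto_eventually)
  next
    case False
    then have "indicator {s + d k..t - d k} x = (indicator {s<..<t} x :: real)" for k
      using d(1)[of k] by (auto simp: indicator_def)
    then show ?thesis
      by simp
  qed
  ultimately show ?thesis
    using d by (intro that[of "\<lambda>k. s + d k" "\<lambda>k. t - d k"]) auto
qed

lemma absolutely_integrable_on_bounded_abs_monotone_limit:
  fixes h :: "nat \<Rightarrow> 'a::euclidean_space \<Rightarrow> real"
  assumes h: "\<And>k. h k absolutely_integrable_on S"
    and mono: "\<And>k x. x \<in> S \<Longrightarrow> \<bar>h k x\<bar> \<le> \<bar>h (Suc k) x\<bar>"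
    and lim: "\<And>x. x \<in> S \<Longrightarrow> (\<lambda>k. h k x) \<longlonglongrightarrow> g x"
    and M: "\<And>k. integral S (\<lambda>x. \<bar>h k x\<bar>) \<le> M"
  shows "g absolutely_integrable_on S"
proof -
  have "(\<lambda>x. \<bar>g x\<bar>) integrable_on S"
  proof (rule conjunct1[OF monotone_convergence_increasing])
    show "(\<lambda>x. \<bar>h k x\<bar>) integrable_on S" for k
      by (rule absolutely_integrable_on_imp_abs_integrable_on[OF h])
    have "0 \<le> integral S (\<lambda>x. \<bar>h k x\<bar>)" for k
      by (intro integral_nonneg absolutely_integrable_on_imp_abs_integrable_on h) auto
    then have "\<bar>integral S (\<lambda>x. \<bar>h k x\<bar>)\<bar> \<le> M" for k
      using M[of k] by simp
    then show "bounded (range (\<lambda>k. integral S (\<lambda>x. \<bar>h k x\<bar>)))"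
      unfolding bounded_iff by auto
  qed (use mono lim in \<open>auto intro: tendsto_rabs\<close>)
  moreover from this have "g integrable_on S"
    by (rule dominated_convergence_integrable[OF h]) (auto intro: lim)
  ultimately show ?thesis
    by (intro abs_absolutely_integrableI_1)
qed

lemma absolutely_integrable_on_Icc_exhaustion:
  fixes f :: "real \<Rightarrow> real"
  assumes "s < t"
    and f: "\<And>a b. s < a \<Longrightarrow> b < t \<Longrightarrow> f absolutely_integrable_on {a..b}"
    and M: "\<And>a b. s < a \<Longrightarrow> a \<le> b \<Longrightarrow> b < t \<Longrightarrow> integral {a..b} (\<lambda>x. \<bar>f x\<bar>) \<le> M"
  shows "f absolutely_integrable_on {s..t}"
proof -
  obtain a b where ab: "\<And>k. s < a k" "\<And>k. a k \<le> b k" "\<And>k. b k < t"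
    and mono: "\<And>k. a (Suc k) \<le> a k" "\<And>k. b k \<le> b (Suc k)"
    and exhausting: "\<And>x. (\<lambda>k. indicator {a k..b k} x :: real) \<longlonglongrightarrow> indicator {s<..<t} x"
    using Icc_exhaustion[OF \<open>s < t\<close>] by blast
  define h where "h k x = (if x \<in> {a k..b k} then f x else 0)" for k x
  define g where "g x = (if x \<in> {s<..<t} then f x else 0)" for x
  have "g absolutely_integrable_on {s..t}"
  proof (rule absolutely_integrable_on_bounded_abs_monotone_limit)
    show "h k absolutely_integrable_on {s..t}" for k
    proof -
      have "h k absolutely_integrable_on UNIV"
        unfolding h_def absolutely_integrable_restrict_UNIV using f[OF ab(1,3)] .
      then show ?thesis
        by (rule set_integrable_subset) auto
    qed
    show "\<bar>h k x\<bar> \<le> \<bar>h (Suc k) x\<bar>" for k x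
      using mono[of k] by (auto simp: h_def)
    show "(\<lambda>k. h k x) \<longlonglongrightarrow> g x" for x
      using tendsto_mult_right[OF exhausting[of x], of "f x"]
      by (simp add: h_def g_def indicator_times_eq_if)
    show "integral {s..t} (\<lambda>x. \<bar>h k x\<bar>) \<le> M" for k
    proof -
      have "integral {s..t} (\<lambda>x. \<bar>h k x\<bar>) = integral {a k..b k} (\<lambda>x. \<bar>f x\<bar>)"
        using integral_restrict_Int[of "{s..t}" "{a k..b k}" "\<lambda>x. \<bar>f x\<bar>"] ab(1,3)[of k]
        by (simp add: h_def if_distrib Int_absorb2 cong: if_cong)
      then show ?thesis
        using M[OF ab(1,2,3)] by simp
    qed
  qed
  then show ?thesis
    by (rule absolutely_integrable_spike[of _ _ "{s, t}"]) (auto simp: g_def)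
qed

section \<open>Cosine coefficients and the Riemann--Lebesgue lemma\<close>

text \<open>For \<open>n \<ge> 1\<close> this is \<open>\<pi>\<close> times the classical Fourier cosine coefficient.\<close>
definition cos_coeff :: "(real \<Rightarrow> real) \<Rightarrow> nat \<Rightarrow> real" where
  "cos_coeff h n = integral {0..2*pi} (\<lambda>t. h t * cos (real n * t))"

lemma has_integral_cos_int_mult:
  fixes m :: int
  assumes "m \<noteq> 0"
  shows "((\<lambda>t. cos (of_int m * t)) has_integral 0) {0..2*pi}"
proof -
  have "((\<lambda>t. cos (of_int m * t)) has_integral
          (sin (of_int m * (2*pi)) / of_int m - sin (of_int m * 0) / of_int m)) {0..2*pi}"
    by (rule fundamental_theorem_of_calculus)
       (use assms in \<open>auto intro!: derivative_eq_intros
          simp: has_real_derivative_iff_has_vector_derivative[symmetric]\<close>)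
  moreover have "sin (of_int m * (2*pi)) = 0"
    using sin_npi_int[of "2*m"] by (simp add: mult_ac)
  ultimately show ?thesis by simp
qed

lemma has_integral_cos_mult_cos:
  "((\<lambda>t. cos (real k * t) * cos (real n * t)) has_integral
     (if k = n then (if n = 0 then 2*pi else pi) else 0)) {0..2*pi}"
proof -
  have prod: "cos (real k * t) * cos (real n * t) =
      cos (of_int (int k - int n) * t) / 2 + cos (of_int (int k + int n) * t) / 2" for t
    by (simp add: cos_times_cos algebra_simps add_divide_distrib)
  have "((\<lambda>t. cos (of_int (int k - int n) * t)) has_integral (if k = n then 2*pi else 0)) {0..2*pi}"
    using has_integral_cos_int_mult[of "int k - int n"] has_integral_const_real[of "1::real" 0 "2*pi"]
    by auto
  moreover have "((\<lambda>t. cos (of_int (int k + int n) * t)) has_integral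
      (if k = 0 \<and> n = 0 then 2*pi else 0)) {0..2*pi}"
    using has_integral_cos_int_mult[of "int k + int n"] has_integral_const_real[of "1::real" 0 "2*pi"]
    by auto
  ultimately have "((\<lambda>t. cos (of_int (int k - int n) * t) / 2 + cos (of_int (int k + int n) * t) / 2)
      has_integral ((if k = n then 2*pi else 0) / 2 + (if k = 0 \<and> n = 0 then 2*pi else 0) / 2)) {0..2*pi}"
    by (intro has_integral_add has_integral_divide)
  then show ?thesis
    unfolding prod by (auto split: if_splits)
qed

lemma abs_cos_mult_diff_le:
  "\<bar>cos (real n * x) - cos (real m * x)\<bar> \<le> (real n ^ 2 + real m ^ 2) / 2 * x^2"
proof -
  have one_minus_cos: "0 \<le> 1 - cos y \<and> 1 - cos y \<le> y^2 / 2" for y :: real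
  proof -
    have "(sin (y/2))^2 \<le> (y/2)^2"
      using abs_sin_x_le_abs_x[of "y/2"] by (metis abs_ge_zero power2_abs power_mono)
    then show ?thesis
      using cos_double_sin[of "y/2"] by (simp add: power2_eq_square)
  qed
  have "\<bar>cos (real n * x) - cos (real m * x)\<bar> \<le> (real n * x)^2 / 2 + (real m * x)^2 / 2"
    using one_minus_cos[of "real n * x"] one_minus_cos[of "real m * x"] by linarith
  then show ?thesis
    by (simp add: power_mult_distrib field_simps)
qed

lemma abs_cos_mult_diff_le_near_0_2pi:
  assumes "\<theta> \<in> {0..e} \<union> {2*pi-e..2*pi}"
  shows "\<bar>cos (real n * \<theta>) - cos (real m * \<theta>)\<bar> \<le> (real n ^ 2 + real m ^ 2) / 2 * e^2"
proof -
  have small: "\<bar>cos (real n * x) - cos (real m * x)\<bar> \<le> (real n ^ 2 + real m ^ 2) / 2 * e^2"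
    if "\<bar>x\<bar> \<le> e" for x
  proof -
    have "x^2 \<le> e^2"
      using power_mono[OF that abs_ge_zero, of 2] by simp
    then show ?thesis
      using abs_cos_mult_diff_le[of n x m] mult_left_mono[of "x^2" "e^2" "(real n ^ 2 + real m ^ 2) / 2"]
      by simp
  qed
  have shift: "cos (real k * (\<theta> - 2*pi)) = cos (real k * \<theta>)" for k
  proof -
    have "real k * (\<theta> - 2*pi) = real k * \<theta> - pi * real (2*k)"
      by (simp add: algebra_simps)
    then show ?thesis
      by (simp only: cos_diff cos_npi2 sin_npi2) simp
  qed
  from assms consider "\<bar>\<theta>\<bar> \<le> e" | "\<bar>\<theta> - 2*pi\<bar> \<le> e"
    by fastforce
  then show ?thesis
    by cases (use small[of \<theta>] small[of "\<theta> - 2*pi"] shift in auto)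
qed

lemma has_integral_cos_sum_square:
  assumes K: "finite K" "0 \<notin> K"
  shows "((\<lambda>t. (\<Sum>k\<in>K. a k * cos (real k * t))^2) has_integral pi * (\<Sum>k\<in>K. (a k)^2)) {0..2*pi}"
proof -
  have "((\<lambda>t. \<Sum>k\<in>K. \<Sum>j\<in>K. a k * a j * (cos (real k * t) * cos (real j * t)))
      has_integral (\<Sum>k\<in>K. \<Sum>j\<in>K. a k * a j * (if k = j then (if j = 0 then 2*pi else pi) else 0)))
      {0..2*pi}"
    by (intro has_integral_sum K(1) has_integral_mult_right has_integral_cos_mult_cos)
  also have "(\<Sum>k\<in>K. \<Sum>j\<in>K. a k * a j * (if k = j then (if j = 0 then 2*pi else pi) else 0))
      = (\<Sum>k\<in>K. \<Sum>j\<in>K. if k = j then pi * (a k)^2 else 0)"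
    using K(2) by (intro sum.cong refl) (auto simp: power2_eq_square)
  also have "\<dots> = pi * (\<Sum>k\<in>K. (a k)^2)"
    using K(1) by (simp add: sum_distrib_left)
  finally show ?thesis
    by (simp add: power2_eq_square sum_product mult_ac)
qed

lemma Bessel_inequality_cos:
  fixes h :: "real \<Rightarrow> real"
  assumes h: "h absolutely_integrable_on {0..2*pi}" and hB: "\<And>x. \<bar>h x\<bar> \<le> B"
    and K: "finite K" "0 \<notin> K"
  shows "(\<Sum>k\<in>K. (cos_coeff h k)^2) \<le> pi * integral {0..2*pi} (\<lambda>t. (h t)^2)"
proof -
  let ?a = "cos_coeff h"
  define s where "s = (\<Sum>k\<in>K. (?a k)^2)"
  define I where "I = integral {0..2*pi} (\<lambda>t. (h t)^2)"
  define P where "P t = (\<Sum>k\<in>K. ?a k * cos (real k * t))" for t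
  have "(\<lambda>t. h t * h t) absolutely_integrable_on {0..2*pi}"
  proof (rule absolutely_integrable_bounded_measurable_product_real)
    show "h \<in> borel_measurable (lebesgue_on {0..2*pi})"
      using h by (simp add: absolutely_integrable_imp_borel_measurable)
    show "bounded (h ` {0..2*pi})"
      unfolding bounded_iff using hB by auto
  qed (use h in auto)
  then have "((\<lambda>t. (h t)^2) has_integral I) {0..2*pi}"
    unfolding I_def power2_eq_square
    by (intro integrable_integral absolutely_integrable_on_imp_integrable_on)
  moreover have "((\<lambda>t. h t * P t) has_integral s) {0..2*pi}"
  proof -
    have "((\<lambda>t. h t * cos (real k * t)) has_integral ?a k) {0..2*pi}" for k
      unfolding cos_coeff_def
      by (intro integrable_integral absolutely_integrable_on_imp_integrable_on
          absolutely_integrable_mult_continuous h continuous_intros)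
    then have "((\<lambda>t. \<Sum>k\<in>K. ?a k * (h t * cos (real k * t))) has_integral (\<Sum>k\<in>K. ?a k * ?a k))
        {0..2*pi}"
      by (intro has_integral_sum K(1) has_integral_mult_right)
    then show ?thesis
      by (simp add: P_def s_def sum_distrib_left power2_eq_square mult_ac)
  qed
  moreover have "((\<lambda>t. (P t)^2) has_integral pi * s) {0..2*pi}"
    unfolding P_def s_def by (rule has_integral_cos_sum_square[OF K])
  ultimately have "((\<lambda>t. (h t)^2 - 2 / pi * (h t * P t) + 1 / pi^2 * (P t)^2)
      has_integral (I - 2 / pi * s + 1 / pi^2 * (pi * s))) {0..2*pi}"
    by (intro has_integral_add has_integral_diff has_integral_mult_right)
  moreover have "(h t)^2 - 2 / pi * (h t * P t) + 1 / pi^2 * (P t)^2 = (h t - P t / pi)^2" for t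
    by (simp add: power2_eq_square field_simps)
  ultimately have "((\<lambda>t. (h t - P t / pi)^2) has_integral (I - 2 / pi * s + 1 / pi^2 * (pi * s)))
      {0..2*pi}"
    by simp
  then have "0 \<le> I - 2 / pi * s + 1 / pi^2 * (pi * s)"
    by (rule has_integral_nonneg) auto
  then show ?thesis
    by (simp add: s_def I_def power2_eq_square field_simps)
qed

lemma Riemann_Lebesgue_cos_bounded:
  fixes h :: "real \<Rightarrow> real"
  assumes h: "h absolutely_integrable_on {0..2*pi}" and hB: "\<And>x. \<bar>h x\<bar> \<le> B"
  shows "cos_coeff h \<longlonglongrightarrow> 0"
proof -
  have "summable (\<lambda>n. (cos_coeff h (Suc n))^2)"
  proof (rule summableI_nonneg_bounded)
    show "(\<Sum>k<n. (cos_coeff h (Suc k))^2) \<le> pi * integral {0..2*pi} (\<lambda>t. (h t)^2)" for n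
      using Bessel_inequality_cos[OF h hB, of "Suc ` {..<n}"] by (simp add: sum.reindex)
  qed auto
  then have "(\<lambda>n. (cos_coeff h (Suc n))^2) \<longlonglongrightarrow> 0"
    by (rule summable_LIMSEQ_zero)
  then have "(\<lambda>n. sqrt ((cos_coeff h (Suc n))^2)) \<longlonglongrightarrow> sqrt 0"
    by (rule tendsto_real_sqrt)
  then have "(\<lambda>n. cos_coeff h (Suc n)) \<longlonglongrightarrow> 0"
    by (simp add: tendsto_rabs_zero_iff)
  then show ?thesis
    by (rule LIMSEQ_imp_Suc)
qed

lemma abs_cos_coeff_le:
  fixes h :: "real \<Rightarrow> real"
  assumes "h absolutely_integrable_on {0..2*pi}"
  shows "\<bar>cos_coeff h n\<bar> \<le> integral {0..2*pi} (\<lambda>t. \<bar>h t\<bar>)"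
  unfolding cos_coeff_def
  by (rule order_trans[OF abs_integral_mult_le[OF assms, of _ 1]]) (auto intro!: continuous_intros)

lemma cos_coeff_diff:
  fixes g h :: "real \<Rightarrow> real"
  assumes "g absolutely_integrable_on {0..2*pi}" "h absolutely_integrable_on {0..2*pi}"
  shows "cos_coeff (\<lambda>t. g t - h t) n = cos_coeff g n - cos_coeff h n"
  unfolding cos_coeff_def left_diff_distrib
  by (intro integral_diff absolutely_integrable_on_imp_integrable_on
      absolutely_integrable_mult_continuous assms continuous_intros)

lemma Riemann_Lebesgue_cos:
  fixes f :: "real \<Rightarrow> real"
  assumes f: "f absolutely_integrable_on {0..2*pi}"
  shows "cos_coeff f \<longlonglongrightarrow> 0"
proof (rule LIMSEQ_I)
  fix \<epsilon> :: real assume "0 < \<epsilon>"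
  define t where "t k x = max (- real k) (min (real k) (f x))" for k x
  have t: "t k absolutely_integrable_on {0..2*pi}" for k
    unfolding t_def
    by (intro absolutely_integrable_max_1 absolutely_integrable_min_1 f
        absolutely_integrable_continuous_real continuous_on_const)
  have ft: "(\<lambda>x. f x - t k x) absolutely_integrable_on {0..2*pi}" for k
    by (intro set_integral_diff(1) f t)
  from LIMSEQ_D[OF tendsto_L1_truncation[OF f] half_gt_zero[OF \<open>0 < \<epsilon>\<close>]] obtain k
    where "\<forall>j\<ge>k. norm (integral {0..2*pi} (\<lambda>x. \<bar>f x - t j x\<bar>) - 0) < \<epsilon> / 2"
    unfolding t_def by blast
  then have k: "integral {0..2*pi} (\<lambda>x. \<bar>f x - t k x\<bar>) < \<epsilon> / 2"
    by auto
  have "\<bar>t k x\<bar> \<le> real k" for x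
    by (auto simp: t_def)
  then have "cos_coeff (t k) \<longlonglongrightarrow> 0"
    by (rule Riemann_Lebesgue_cos_bounded[OF t])
  from LIMSEQ_D[OF this half_gt_zero[OF \<open>0 < \<epsilon>\<close>]] obtain N
    where N: "\<forall>n\<ge>N. norm (cos_coeff (t k) n - 0) < \<epsilon> / 2"
    by blast
  have "\<bar>cos_coeff f n\<bar> < \<epsilon>" if "N \<le> n" for n
  proof -
    have "cos_coeff f n = cos_coeff (\<lambda>x. f x - t k x) n + cos_coeff (t k) n"
      using cos_coeff_diff[OF f t, of k n] by simp
    moreover have "\<bar>cos_coeff (\<lambda>x. f x - t k x) n\<bar> < \<epsilon> / 2"
      using abs_cos_coeff_le[OF ft, of k n] k by linarith
    ultimately show ?thesis
      using N that by auto
  qed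
  then show "\<exists>N. \<forall>n\<ge>N. norm (cos_coeff f n - 0) < \<epsilon>"
    by auto
qed

section \<open>Abel means\<close>

lemma Abel_mean_bound:
  fixes e :: "nat \<Rightarrow> real"
  assumes B: "\<And>k. \<bar>e k\<bar> \<le> B" and \<epsilon>: "\<And>k. N \<le> k \<Longrightarrow> \<bar>e k\<bar> \<le> \<epsilon>"
    and r: "0 \<le> r" "r < 1"
  shows "summable (\<lambda>k. e k * r^k)"
    and "\<bar>(1 - r) * (\<Sum>k. e k * r^k)\<bar> \<le> (1 - r) * (real N * B) + \<epsilon>"
proof -
  have "0 \<le> \<epsilon>"
    using \<epsilon>[of N] by simp
  define b where "b k = (if k < N then B else 0) + \<epsilon> * r^k" for k
  have eb: "norm (e k * r^k) \<le> b k" for k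
  proof (cases "k < N")
    case True
    have "\<bar>e k\<bar> * r^k \<le> B * 1"
      using B[of k] r by (intro mult_mono) (auto simp: power_le_one)
    moreover have "0 \<le> \<epsilon> * r^k"
      using r \<open>0 \<le> \<epsilon>\<close> by simp
    ultimately show ?thesis
      using True r by (simp add: b_def abs_mult)
  next
    case False
    then show ?thesis
      using \<epsilon>[of k] r by (simp add: b_def abs_mult mult_right_mono)
  qed
  have geometric: "summable (\<lambda>k. \<epsilon> * r^k)" "(\<Sum>k. \<epsilon> * r^k) = \<epsilon> / (1 - r)"
    using r by (auto simp: suminf_mult suminf_geometric)
  have initial: "summable (\<lambda>k. if k < N then B else 0)" "(\<Sum>k. if k < N then B else 0) = real N * B"
    by (auto intro: summable_finite[of "{..<N}"]) (subst suminf_finite[of "{..<N}"], auto)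
  have b: "summable b" "suminf b = real N * B + \<epsilon> / (1 - r)"
    unfolding b_def using suminf_add[OF initial(1) geometric(1)] geometric initial
    by (auto intro: summable_add)
  have "summable (\<lambda>k. norm (e k * r^k))"
    by (rule summable_comparison_test'[OF b(1)]) (use eb in simp)
  then show "summable (\<lambda>k. e k * r^k)"
    by (rule summable_norm_cancel)
  have "\<bar>\<Sum>k. e k * r^k\<bar> \<le> (\<Sum>k. norm (e k * r^k))"
    using summable_norm[OF \<open>summable (\<lambda>k. norm (e k * r^k))\<close>] by simp
  also have "\<dots> \<le> real N * B + \<epsilon> / (1 - r)"
    using suminf_le[OF eb \<open>summable (\<lambda>k. norm (e k * r^k))\<close> b(1)] b(2) by simp
  finally have "(1 - r) * \<bar>\<Sum>k. e k * r^k\<bar> \<le> (1 - r) * (real N * B + \<epsilon> / (1 - r))"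
    using r by (intro mult_left_mono) auto
  then show "\<bar>(1 - r) * (\<Sum>k. e k * r^k)\<bar> \<le> (1 - r) * (real N * B) + \<epsilon>"
    using r by (simp add: abs_mult distrib_left)
qed

lemma tendsto_Abel_mean_zero:
  fixes e :: "nat \<Rightarrow> real"
  assumes e: "e \<longlonglongrightarrow> 0"
  shows "((\<lambda>r. (1 - r) * (\<Sum>k. e k * r^k)) \<longlongrightarrow> 0) (at_left 1)"
proof (rule tendstoI)
  fix \<epsilon> :: real assume "0 < \<epsilon>"
  obtain B where B: "\<And>k. \<bar>e k\<bar> \<le> B"
    using BseqE[OF convergent_imp_Bseq[OF convergentI[OF e]]] by (metis real_norm_def)
  from LIMSEQ_D[OF e half_gt_zero[OF \<open>0 < \<epsilon>\<close>]] obtain N where "\<forall>k\<ge>N. norm (e k - 0) < \<epsilon> / 2"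
    by blast
  then have N: "\<And>k. N \<le> k \<Longrightarrow> \<bar>e k\<bar> \<le> \<epsilon> / 2"
    by fastforce
  have "((\<lambda>r. (1 - r) * (real N * B)) \<longlongrightarrow> (1 - 1) * (real N * B)) (at_left 1)"
    by (intro tendsto_intros)
  then have "eventually (\<lambda>r. (1 - r) * (real N * B) < \<epsilon> / 2) (at_left 1)"
    by (rule order_tendstoD) (use \<open>0 < \<epsilon>\<close> in simp)
  then show "eventually (\<lambda>r. dist ((1 - r) * (\<Sum>k. e k * r^k)) 0 < \<epsilon>) (at_left 1)"
    using eventually_at_left_real[OF zero_less_one]
  proof eventually_elim
    case (elim r)
    then show ?case
      using Abel_mean_bound(2)[of e B N "\<epsilon> / 2" r] B N by simp
  qed
qed

lemma tendsto_Abel_mean: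
  fixes c :: "nat \<Rightarrow> real"
  assumes c: "c \<longlonglongrightarrow> L"
  shows "((\<lambda>r. (1 - r) * (\<Sum>k. c k * r^k)) \<longlongrightarrow> L) (at_left 1)"
proof -
  define e where "e k = c k - L" for k
  have e: "e \<longlonglongrightarrow> 0"
    using c unfolding e_def by (rule LIM_zero)
  obtain B where B: "\<And>k. \<bar>e k\<bar> \<le> B"
    using BseqE[OF convergent_imp_Bseq[OF convergentI[OF e]]] by (metis real_norm_def)
  have "((\<lambda>r. (1 - r) * (\<Sum>k. e k * r^k) + L) \<longlongrightarrow> 0 + L) (at_left 1)"
    by (intro tendsto_add tendsto_const tendsto_Abel_mean_zero e)
  moreover have "eventually (\<lambda>r. (1 - r) * (\<Sum>k. e k * r^k) + L = (1 - r) * (\<Sum>k. c k * r^k))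
      (at_left 1)"
    using eventually_at_left_real[OF zero_less_one]
  proof eventually_elim
    case (elim r)
    then have r: "0 \<le> r" "r < 1" by auto
    have "summable (\<lambda>k. e k * r^k)"
      using Abel_mean_bound(1)[of e B 0 B r] B r by blast
    moreover have "summable (\<lambda>k. L * r^k)" "(\<Sum>k. L * r^k) = L / (1 - r)"
      using r by (auto simp: suminf_mult suminf_geometric)
    ultimately have "(\<Sum>k. c k * r^k) = (\<Sum>k. e k * r^k) + L / (1 - r)"
      using suminf_add[of "\<lambda>k. e k * r^k" "\<lambda>k. L * r^k"] by (simp add: e_def algebra_simps)
    then show ?case
      using r by (simp add: field_simps)
  qed
  ultimately show ?thesis
    by (simp add: tendsto_cong)
qed

section \<open>The real part of a power series on circles\<close>

locale disc_power_series =
  fixes c :: "nat \<Rightarrow> real"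
  assumes summable_disc: "\<And>z. norm z < 1 \<Longrightarrow> summable (\<lambda>n. complex_of_real (c n) * z ^ n)"
begin

abbreviation u :: "real \<Rightarrow> real \<Rightarrow> real" where
  "u r \<theta> \<equiv> psU c (complex_of_real r * cis \<theta>)"

lemma summable_abs_coeff:
  assumes "0 \<le> r" "r < 1"
  shows "summable (\<lambda>k. \<bar>c k\<bar> * r^k)"
proof -
  have "summable (\<lambda>n. complex_of_real (c n) * complex_of_real ((1 + r) / 2) ^ n)"
    using assms by (intro summable_disc) (simp only: norm_of_real, auto)
  moreover have "norm (complex_of_real r) < norm (complex_of_real ((1 + r) / 2))"
    unfolding norm_of_real using assms by auto
  ultimately have "summable (\<lambda>n. norm (complex_of_real (c n) * complex_of_real r ^ n))"
    by (rule powser_insidea)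
  then show ?thesis
    by (simp add: norm_mult norm_power abs_of_nonneg assms)
qed

lemma u_eq_suminf:
  assumes "0 \<le> r" "r < 1"
  shows "u r \<theta> = (\<Sum>k. c k * r^k * cos (real k * \<theta>))"
proof -
  have "summable (\<lambda>n. complex_of_real (c n) * (complex_of_real r * cis \<theta>) ^ n)"
    using assms by (intro summable_disc) (auto simp: norm_mult)
  then have "u r \<theta> = (\<Sum>n. Re (complex_of_real (c n) * (complex_of_real r * cis \<theta>) ^ n))"
    unfolding psU_def psF_def by (rule Re_suminf)
  also have "\<dots> = (\<Sum>k. c k * r^k * cos (real k * \<theta>))"
    by (simp add: power_mult_distrib mult.assoc Complex.DeMoivre flip: of_real_power)
  finally show ?thesis .
qed

lemma u_periodic: "u r (2*pi + \<theta>) = u r \<theta>"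
proof -
  have "cis (2*pi + \<theta>) = cis \<theta>"
    by (simp add: complex_eq_iff add.commute[of "2*pi"])
  then show ?thesis by simp
qed

lemma uniform_limit_u_mult:
  assumes r: "0 \<le> r" "r < 1" and w: "\<And>\<theta>. \<bar>w \<theta>\<bar> \<le> 1"
  shows "uniform_limit UNIV (\<lambda>N \<theta>. \<Sum>k<N. c k * r^k * cos (real k * \<theta>) * w \<theta>)
           (\<lambda>\<theta>. u r \<theta> * w \<theta>) sequentially"
proof -
  have bound: "norm (c k * r^k * cos (real k * \<theta>) * w \<theta>) \<le> \<bar>c k\<bar> * r^k" for k \<theta>
  proof -
    have "\<bar>cos (real k * \<theta>)\<bar> * \<bar>w \<theta>\<bar> \<le> 1"
      using w[of \<theta>] by (intro mult_le_one) auto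
    then show ?thesis
      using r mult_left_mono[of _ 1 "\<bar>c k\<bar> * r^k"] by (simp add: abs_mult mult.assoc)
  qed
  have "uniform_limit UNIV (\<lambda>N \<theta>. \<Sum>k<N. c k * r^k * cos (real k * \<theta>) * w \<theta>)
      (\<lambda>\<theta>. \<Sum>k. c k * r^k * cos (real k * \<theta>) * w \<theta>) sequentially"
    by (rule Weierstrass_m_test[OF _ summable_abs_coeff[OF r]]) (use bound in blast)
  moreover have "(\<Sum>k. c k * r^k * cos (real k * \<theta>) * w \<theta>) = u r \<theta> * w \<theta>" for \<theta>
  proof -
    have "summable (\<lambda>k. c k * r^k * cos (real k * \<theta>))"
      using bound[of _ \<theta>] w[of \<theta>]
      by (intro summable_comparison_test'[OF summable_abs_coeff[OF r], of 0])
         (use r in \<open>auto simp: abs_mult intro!: mult_left_le\<close>)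
    then show ?thesis
      unfolding u_eq_suminf[OF r] by (rule suminf_mult2[symmetric])
  qed
  ultimately show ?thesis
    by simp
qed

lemma continuous_on_u:
  assumes "0 \<le> r" "r < 1"
  shows "continuous_on S (u r)"
proof -
  have "continuous_on UNIV (\<lambda>\<theta>. u r \<theta> * 1)"
    by (rule uniform_limit_theorem[OF _ uniform_limit_u_mult[OF assms]])
       (auto intro!: always_eventually continuous_intros)
  then show ?thesis
    by (auto intro: continuous_on_subset)
qed

lemma absolutely_integrable_u:
  "0 \<le> r \<Longrightarrow> r < 1 \<Longrightarrow> u r absolutely_integrable_on {a..b}"
  by (intro absolutely_integrable_continuous_real continuous_on_u)

lemma has_integral_u_mult_cos:
  assumes r: "0 \<le> r" "r < 1"
  shows "((\<lambda>\<theta>. u r \<theta> * cos (real n * \<theta>)) has_integral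
           c n * r^n * (if n = 0 then 2*pi else pi)) {0..2*pi}"
proof -
  define V where "V = c n * r^n * (if n = 0 then 2*pi else pi)"
  obtain I J where I: "\<And>N. ((\<lambda>\<theta>. \<Sum>k<N. c k * r^k * cos (real k * \<theta>) * cos (real n * \<theta>))
        has_integral I N) {0..2*pi}"
    and J: "((\<lambda>\<theta>. u r \<theta> * cos (real n * \<theta>)) has_integral J) {0..2*pi}"
    and IJ: "I \<longlonglongrightarrow> J"
    by (rule uniform_limit_integral[OF uniform_limit_on_subset[OF
          uniform_limit_u_mult[OF r, where w = "\<lambda>\<theta>. cos (real n * \<theta>)"]]])
       (auto intro!: continuous_intros)
  have "I N = V" if "n < N" for N
  proof -
    have "((\<lambda>\<theta>. \<Sum>k<N. c k * r^k * (cos (real k * \<theta>) * cos (real n * \<theta>))) has_integral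
        (\<Sum>k<N. c k * r^k * (if k = n then (if n = 0 then 2*pi else pi) else 0))) {0..2*pi}"
      by (intro has_integral_sum finite_lessThan has_integral_mult_right has_integral_cos_mult_cos)
    moreover have "(\<Sum>k<N. c k * r^k * (if k = n then (if n = 0 then 2*pi else pi) else 0)) = V"
      using that by (simp add: V_def if_distrib[of "\<lambda>x. _ * x"] cong: if_cong)
    ultimately show ?thesis
      using I[of N] by (simp add: mult.assoc has_integral_unique)
  qed
  then have "I \<longlonglongrightarrow> V"
    by (intro tendsto_eventually eventually_mono[OF eventually_gt_at_top[of n]]) simp
  with IJ J show ?thesis
    unfolding V_def using LIMSEQ_unique by blast
qed

lemma integral_u:
  "0 \<le> r \<Longrightarrow> r < 1 \<Longrightarrow> integral {0..2*pi} (u r) = 2 * pi * c 0"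
  using has_integral_u_mult_cos[of r 0] by (simp add: integral_unique)

lemma tendsto_Abel_mean_psU:
  assumes "c \<longlonglongrightarrow> L"
  shows "((\<lambda>r. (1 - r) * psU c (complex_of_real r)) \<longlongrightarrow> L) (at_left 1)"
proof -
  have "eventually (\<lambda>r. (1 - r) * (\<Sum>k. c k * r^k) = (1 - r) * psU c (complex_of_real r)) (at_left 1)"
    using eventually_at_left_real[OF zero_less_one]
    by eventually_elim (use u_eq_suminf[of _ 0] in simp)
  with tendsto_Abel_mean[OF assms] show ?thesis
    by (simp add: tendsto_cong)
qed

lemma integral_u_near_0:
  assumes "0 \<le> r" "r < 1" "0 \<le> \<eta>" "\<eta> \<le> pi"
  shows "integral {-\<eta>..\<eta>} (u r) = 2 * pi * c 0 - integral {\<eta>..2*pi-\<eta>} (u r)"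
  using integral_periodic_split[of "u r" \<eta> "2*pi"] integral_u assms
  by (simp add: u_periodic absolutely_integrable_on_imp_integrable_on absolutely_integrable_u)

lemma integral_abs_u_split:
  assumes "0 \<le> r" "r < 1" "0 \<le> \<eta>" "\<eta> \<le> pi"
  shows "integral {0..2*pi} (\<lambda>\<theta>. \<bar>u r \<theta>\<bar>)
           = integral {-\<eta>..\<eta>} (\<lambda>\<theta>. \<bar>u r \<theta>\<bar>) + integral {\<eta>..2*pi-\<eta>} (\<lambda>\<theta>. \<bar>u r \<theta>\<bar>)"
  using assms by (intro integral_periodic_split absolutely_integrable_on_imp_abs_integrable_on
      absolutely_integrable_u) (auto simp: u_periodic)

end

section \<open>Boundary values in \<open>L\<^sup>1\<^sub>l\<^sub>o\<^sub>c\<close>\<close>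

locale L1loc_boundary_values = disc_power_series +
  fixes f :: "real \<Rightarrow> real"
  assumes f_integrable: "\<And>a b. 0 < a \<Longrightarrow> b < 2*pi \<Longrightarrow> f absolutely_integrable_on {a..b}"
    and u_L1_tendsto: "\<And>a b. 0 < a \<Longrightarrow> a \<le> b \<Longrightarrow> b < 2*pi \<Longrightarrow>
      ((\<lambda>r. integral {a..b} (\<lambda>\<theta>. \<bar>u r \<theta> - f \<theta>\<bar>)) \<longlongrightarrow> 0) (at_left 1)"
begin

lemma eventually_absolutely_integrable_u:
  "eventually (\<lambda>r. u r absolutely_integrable_on {a..b}) (at_left 1)"
  by (rule eventually_mono[OF eventually_at_left_real[OF zero_less_one]]) (auto intro: absolutely_integrable_u)

lemma tendsto_integral_u:
  assumes "0 < a" "a \<le> b" "b < 2*pi"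
  shows "((\<lambda>r. integral {a..b} (u r)) \<longlongrightarrow> integral {a..b} f) (at_left 1)"
    and "((\<lambda>r. integral {a..b} (\<lambda>\<theta>. \<bar>u r \<theta>\<bar>)) \<longlongrightarrow> integral {a..b} (\<lambda>\<theta>. \<bar>f \<theta>\<bar>)) (at_left 1)"
  using L1_tendsto_imp_tendsto_integral[OF u_L1_tendsto[OF assms] f_integrable eventually_absolutely_integrable_u]
    assms by auto

lemma L1_bounded_if_near_bounded:
  assumes \<eta>: "0 < \<eta>" "\<eta> \<le> pi"
    and near: "eventually (\<lambda>r. integral {-\<eta>..\<eta>} (\<lambda>\<theta>. \<bar>u r \<theta>\<bar>) \<le> M) (at_left 1)"
  shows "\<exists>M'. eventually (\<lambda>r. integral {0..2*pi} (\<lambda>\<theta>. \<bar>u r \<theta>\<bar>) \<le> M') (at_left 1)"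
proof -
  define F where "F = integral {\<eta>..2*pi-\<eta>} (\<lambda>\<theta>. \<bar>f \<theta>\<bar>)"
  have "eventually (\<lambda>r. integral {\<eta>..2*pi-\<eta>} (\<lambda>\<theta>. \<bar>u r \<theta>\<bar>) < F + 1) (at_left 1)"
    using tendsto_integral_u(2)[of \<eta> "2*pi-\<eta>"] \<eta> unfolding F_def by (intro order_tendstoD) auto
  then have "eventually (\<lambda>r. integral {0..2*pi} (\<lambda>\<theta>. \<bar>u r \<theta>\<bar>) \<le> M + (F + 1)) (at_left 1)"
    using near eventually_at_left_real[OF zero_less_one]
  proof eventually_elim
    case (elim r)
    then show ?case
      using integral_abs_u_split[of r \<eta>] \<eta> by simp
  qed
  then show ?thesis ..
qed

lemma near_bounded_if_lower_bound:
  fixes g :: "real \<Rightarrow> real"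
  assumes \<eta>: "0 < \<eta>" "\<eta> \<le> pi" and g: "g absolutely_integrable_on {-\<eta>..\<eta>}"
    and lower: "AE \<theta> in lebesgue. \<theta> \<in> {-\<eta><..<\<eta>} \<longrightarrow> (\<forall>r\<in>{0..<1}. g \<theta> \<le> u r \<theta>)"
  shows "\<exists>M. eventually (\<lambda>r. integral {-\<eta>..\<eta>} (\<lambda>\<theta>. \<bar>u r \<theta>\<bar>) \<le> M) (at_left 1)"
proof -
  obtain N where below: "\<And>\<theta>. \<theta> \<in> space lebesgue - N \<Longrightarrow>
      \<theta> \<in> {-\<eta><..<\<eta>} \<longrightarrow> (\<forall>r\<in>{0..<1}. g \<theta> \<le> u r \<theta>)"
    and N: "N \<in> null_sets lebesgue"
    using AE_E3[OF lower] by blast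
  have negligible: "negligible (N \<union> {-\<eta>, \<eta>})"
    using N by (simp add: negligible_iff_null_sets)
  define F where "F = integral {\<eta>..2*pi-\<eta>} f"
  define G where "G = integral {-\<eta>..\<eta>} (\<lambda>\<theta>. \<bar>g \<theta>\<bar>)"
  have "eventually (\<lambda>r. F - 1 < integral {\<eta>..2*pi-\<eta>} (u r)) (at_left 1)"
    using tendsto_integral_u(1)[of \<eta> "2*pi-\<eta>"] \<eta> unfolding F_def by (intro order_tendstoD) auto
  then have "eventually (\<lambda>r. integral {-\<eta>..\<eta>} (\<lambda>\<theta>. \<bar>u r \<theta>\<bar>) \<le> 2*pi*c 0 - (F - 1) + 2 * G)
      (at_left 1)"
    using eventually_at_left_real[OF zero_less_one]
  proof eventually_elim
    case (elim r)
    then have r: "0 \<le> r" "r < 1" by auto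
    have "integral {-\<eta>..\<eta>} (\<lambda>\<theta>. \<bar>u r \<theta>\<bar>) \<le> integral {-\<eta>..\<eta>} (u r) + 2 * G"
      unfolding G_def
    proof (rule integral_abs_le_if_lower_bound[OF absolutely_integrable_u[OF r] g negligible])
      show "g \<theta> \<le> u r \<theta>" if "\<theta> \<in> {-\<eta>..\<eta>} - (N \<union> {-\<eta>, \<eta>})" for \<theta>
        using below[of \<theta>] that r by auto
    qed
    then show ?case
      using integral_u_near_0[OF r] \<eta> elim by simp
  qed
  then show ?thesis ..
qed

lemma boundary_absolutely_integrable:
  assumes bounded: "eventually (\<lambda>r. integral {0..2*pi} (\<lambda>\<theta>. \<bar>u r \<theta>\<bar>) \<le> M) (at_left 1)"
  shows "f absolutely_integrable_on {0..2*pi}"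
proof (rule absolutely_integrable_on_Icc_exhaustion)
  show "integral {a..b} (\<lambda>\<theta>. \<bar>f \<theta>\<bar>) \<le> M" if ab: "0 < a" "a \<le> b" "b < 2*pi" for a b
  proof (rule tendsto_upperbound[OF tendsto_integral_u(2)[OF ab]])
    show "eventually (\<lambda>r. integral {a..b} (\<lambda>\<theta>. \<bar>u r \<theta>\<bar>) \<le> M) (at_left 1)"
      using bounded eventually_at_left_real[OF zero_less_one]
    proof eventually_elim
      case (elim r)
      have "integral {a..b} (\<lambda>\<theta>. \<bar>u r \<theta>\<bar>) \<le> integral {0..2*pi} (\<lambda>\<theta>. \<bar>u r \<theta>\<bar>)"
        using elim ab
        by (intro integral_subset_le absolutely_integrable_on_imp_abs_integrable_on absolutely_integrable_u) auto
      then show ?case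
        using elim by simp
    qed
  qed simp
qed (use f_integrable in auto)

lemma integral_u_minus_boundary_mult_cos_diff:
  assumes f: "f absolutely_integrable_on {0..2*pi}" and r: "0 \<le> r" "r < 1" and nm: "1 \<le> n" "1 \<le> m"
  shows "integral {0..2*pi} (\<lambda>\<theta>. (u r \<theta> - f \<theta>) * (cos (real n * \<theta>) - cos (real m * \<theta>)))
           = pi * (c n * r^n - c m * r^m) - (cos_coeff f n - cos_coeff f m)"
proof -
  have f_cos: "((\<lambda>\<theta>. f \<theta> * cos (real k * \<theta>)) has_integral cos_coeff f k) {0..2*pi}" for k
    unfolding cos_coeff_def
    by (intro integrable_integral absolutely_integrable_on_imp_integrable_on
        absolutely_integrable_mult_continuous f continuous_intros)
  have "((\<lambda>\<theta>. (u r \<theta> * cos (real n * \<theta>) - u r \<theta> * cos (real m * \<theta>))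
        - (f \<theta> * cos (real n * \<theta>) - f \<theta> * cos (real m * \<theta>)))
      has_integral (c n * r^n * pi - c m * r^m * pi) - (cos_coeff f n - cos_coeff f m)) {0..2*pi}"
    using has_integral_u_mult_cos[OF r, of n] has_integral_u_mult_cos[OF r, of m] nm
    by (intro has_integral_diff f_cos) auto
  then show ?thesis
    by (intro integral_unique) (simp add: algebra_simps)
qed

lemma coeff_diff_error_le_at:
  assumes f: "f absolutely_integrable_on {0..2*pi}" and r: "0 \<le> r" "r < 1"
    and uM: "integral {0..2*pi} (\<lambda>\<theta>. \<bar>u r \<theta>\<bar>) \<le> M"
    and nm: "1 \<le> n" "1 \<le> m" and e: "0 < e" "e \<le> pi"
  shows "\<bar>pi * (c n * r^n - c m * r^m) - (cos_coeff f n - cos_coeff f m)\<bar>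
           \<le> (real n ^ 2 + real m ^ 2) / 2 * e^2 * (M + integral {0..2*pi} (\<lambda>\<theta>. \<bar>f \<theta>\<bar>))
             + 2 * integral {e..2*pi-e} (\<lambda>\<theta>. \<bar>u r \<theta> - f \<theta>\<bar>)"
proof -
  define K where "K = (real n ^ 2 + real m ^ 2) / 2 * e^2"
  define D where "D \<theta> = cos (real n * \<theta>) - cos (real m * \<theta>)" for \<theta>
  have "0 \<le> K"
    by (simp add: K_def)
  have uf: "(\<lambda>\<theta>. u r \<theta> - f \<theta>) absolutely_integrable_on {0..2*pi}"
    by (intro set_integral_diff(1) absolutely_integrable_u r f)
  have "integral {0..2*pi} (\<lambda>\<theta>. \<bar>u r \<theta> - f \<theta>\<bar>) \<le> integral {0..2*pi} (\<lambda>\<theta>. \<bar>u r \<theta>\<bar> + \<bar>f \<theta>\<bar>)"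
    by (intro integral_le absolutely_integrable_on_imp_abs_integrable_on integrable_add uf f
        absolutely_integrable_u r) auto
  also have "\<dots> \<le> M + integral {0..2*pi} (\<lambda>\<theta>. \<bar>f \<theta>\<bar>)"
    using uM by (simp add: integral_add absolutely_integrable_on_imp_abs_integrable_on f absolutely_integrable_u r)
  finally have "K * integral {0..2*pi} (\<lambda>\<theta>. \<bar>u r \<theta> - f \<theta>\<bar>) \<le> K * (M + integral {0..2*pi} (\<lambda>\<theta>. \<bar>f \<theta>\<bar>))"
    using \<open>0 \<le> K\<close> by (rule mult_left_mono)
  moreover have "\<bar>integral {0..2*pi} (\<lambda>\<theta>. (u r \<theta> - f \<theta>) * D \<theta>)\<bar>
      \<le> K * integral {0..2*pi} (\<lambda>\<theta>. \<bar>u r \<theta> - f \<theta>\<bar>) + 2 * integral {e..2*pi-e} (\<lambda>\<theta>. \<bar>u r \<theta> - f \<theta>\<bar>)"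
  proof (rule abs_integral_mult_le_split[OF uf _ _ _ _ _ \<open>0 \<le> K\<close>])
    show "\<bar>D \<theta>\<bar> \<le> K" if "\<theta> \<in> {0..e} \<union> {2*pi-e..2*pi}" for \<theta>
      unfolding D_def K_def using that by (rule abs_cos_mult_diff_le_near_0_2pi)
    show "\<bar>D \<theta>\<bar> \<le> 2" for \<theta>
      unfolding D_def using abs_cos_le_one[of "real n * \<theta>"] abs_cos_le_one[of "real m * \<theta>"] by linarith
  qed (use e in \<open>auto simp: D_def intro!: continuous_intros\<close>)
  ultimately show ?thesis
    using integral_u_minus_boundary_mult_cos_diff[OF f r nm] unfolding D_def K_def by linarith
qed

lemma coeff_diff_error_le:
  assumes bounded: "eventually (\<lambda>r. integral {0..2*pi} (\<lambda>\<theta>. \<bar>u r \<theta>\<bar>) \<le> M) (at_left 1)"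
    and nm: "1 \<le> n" "1 \<le> m" and e: "0 < e" "e \<le> pi"
  shows "\<bar>pi * (c n - c m) - (cos_coeff f n - cos_coeff f m)\<bar>
           \<le> (real n ^ 2 + real m ^ 2) / 2 * e^2 * (M + integral {0..2*pi} (\<lambda>\<theta>. \<bar>f \<theta>\<bar>))"
proof -
  have f: "f absolutely_integrable_on {0..2*pi}"
    using bounded by (rule boundary_absolutely_integrable)
  define B where "B = (real n ^ 2 + real m ^ 2) / 2 * e^2 * (M + integral {0..2*pi} (\<lambda>\<theta>. \<bar>f \<theta>\<bar>))"
  define E where "E r = integral {e..2*pi-e} (\<lambda>\<theta>. \<bar>u r \<theta> - f \<theta>\<bar>)" for r
  have "eventually (\<lambda>r. \<bar>pi * (c n * r^n - c m * r^m) - (cos_coeff f n - cos_coeff f m)\<bar> \<le> B + 2 * E r)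
      (at_left 1)"
    using bounded eventually_at_left_real[OF zero_less_one]
  proof eventually_elim
    case (elim r)
    then show ?case
      unfolding B_def E_def by (intro coeff_diff_error_le_at[OF f _ _ _ nm e]) auto
  qed
  moreover have "((\<lambda>r. \<bar>pi * (c n * r^n - c m * r^m) - (cos_coeff f n - cos_coeff f m)\<bar>)
      \<longlongrightarrow> \<bar>pi * (c n * 1^n - c m * 1^m) - (cos_coeff f n - cos_coeff f m)\<bar>) (at_left 1)"
    by (intro tendsto_intros)
  moreover have "((\<lambda>r. B + 2 * E r) \<longlongrightarrow> B + 2 * 0) (at_left 1)"
    unfolding E_def using e by (intro tendsto_intros u_L1_tendsto) auto
  ultimately have "\<bar>pi * (c n - c m) - (cos_coeff f n - cos_coeff f m)\<bar> \<le> B + 2 * 0"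
    by (intro tendsto_le[OF trivial_limit_at_left_real]) simp_all
  then show ?thesis
    by (simp add: B_def)
qed

lemma coeff_diff_eq_cos_coeff_diff:
  assumes bounded: "eventually (\<lambda>r. integral {0..2*pi} (\<lambda>\<theta>. \<bar>u r \<theta>\<bar>) \<le> M) (at_left 1)"
    and nm: "1 \<le> n" "1 \<le> m"
  shows "pi * (c n - c m) = cos_coeff f n - cos_coeff f m"
proof -
  define K where "K = (real n ^ 2 + real m ^ 2) / 2 * (M + integral {0..2*pi} (\<lambda>\<theta>. \<bar>f \<theta>\<bar>))"
  have "eventually (\<lambda>e. \<bar>pi * (c n - c m) - (cos_coeff f n - cos_coeff f m)\<bar> \<le> K * e^2) (at_right 0)"
    using eventually_at_right_real[OF pi_gt_zero]
    by eventually_elim (use coeff_diff_error_le[OF bounded nm] in \<open>auto simp: K_def mult_ac\<close>)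
  moreover have "((\<lambda>e. K * e^2) \<longlongrightarrow> K * 0^2) (at_right 0)"
    by (intro tendsto_intros)
  ultimately have "\<bar>pi * (c n - c m) - (cos_coeff f n - cos_coeff f m)\<bar> \<le> K * 0^2"
    by (intro tendsto_le[OF trivial_limit_at_right_real _ tendsto_const])
  then show ?thesis
    by simp
qed

lemma tendsto_coeff:
  assumes bounded: "eventually (\<lambda>r. integral {0..2*pi} (\<lambda>\<theta>. \<bar>u r \<theta>\<bar>) \<le> M) (at_left 1)"
  shows "c \<longlonglongrightarrow> c 1 - cos_coeff f 1 / pi"
proof -
  have "(\<lambda>n. c 1 - cos_coeff f 1 / pi + cos_coeff f n / pi) \<longlonglongrightarrow> c 1 - cos_coeff f 1 / pi + 0 / pi"
    by (intro tendsto_intros Riemann_Lebesgue_cos boundary_absolutely_integrable[OF bounded]) simp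
  moreover have "eventually (\<lambda>n. c 1 - cos_coeff f 1 / pi + cos_coeff f n / pi = c n) sequentially"
    using eventually_ge_at_top[of 1]
    by eventually_elim (use coeff_diff_eq_cos_coeff_diff[OF bounded, of _ 1] in \<open>simp add: field_simps\<close>)
  ultimately show ?thesis
    by (simp add: tendsto_cong)
qed

end

theorem theorem1p4:
  fixes c :: "nat \<Rightarrow> real" and \<theta>0 :: real
  assumes conv: "\<And>z. norm z < 1 \<Longrightarrow> summable (\<lambda>n. complex_of_real (c n) * z ^ n)"
    and bdry: "L1loc_boundary (psU c)"
    and th0: "0 < \<theta>0" "\<theta>0 < pi"
    and b: "(\<exists>C\<ge>0. \<forall>\<theta>\<in>{-\<theta>0<..<\<theta>0}. \<forall>r\<in>{0..<1}.
                 psU c (complex_of_real r * cis \<theta>) \<ge> - C)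
          \<or> (\<exists>M. \<forall>r\<in>{0<..<1}.
                 integral {-\<theta>0..\<theta>0} (\<lambda>\<theta>. \<bar>psU c (complex_of_real r * cis \<theta>)\<bar>) \<le> M)
          \<or> (\<exists>(g :: real \<Rightarrow> real) (k :: nat) K.
                 g absolutely_integrable_on {-\<theta>0..\<theta>0} \<and>
                 (\<forall>\<theta>\<in>{-\<theta>0<..<\<theta>0}. \<forall>r\<in>{0..<1}.
                    \<bar>psU c (complex_of_real r * cis \<theta>)\<bar> \<le> K / (1 - r) ^ k) \<and>
                 (AE \<theta> in lebesgue. \<theta> \<in> {-\<theta>0<..<\<theta>0} \<longrightarrow>
                    (\<forall>r\<in>{0..<1}. g \<theta> \<le> psU c (complex_of_real r * cis \<theta>))))"
  shows "\<exists>L. c \<longlonglongrightarrow> L \<and>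
           ((\<lambda>r. (1 - r) * psU c (complex_of_real r)) \<longlongrightarrow> L) (at_left 1)"
proof -
  obtain f where "L1loc_boundary_values c f"
    using conv bdry unfolding L1loc_boundary_def L1loc_boundary_values_def
      L1loc_boundary_values_axioms_def disc_power_series_def by blast
  then interpret L1loc_boundary_values c f .
  have "\<exists>M. eventually (\<lambda>r. integral {-\<theta>0..\<theta>0} (\<lambda>\<theta>. \<bar>u r \<theta>\<bar>) \<le> M) (at_left 1)"
    using b
  proof (elim disjE exE conjE)
    fix C :: real
    assume "\<forall>\<theta>\<in>{-\<theta>0<..<\<theta>0}. \<forall>r\<in>{0..<1}. u r \<theta> \<ge> - C"
    then show ?thesis
      using th0 by (intro near_bounded_if_lower_bound[of \<theta>0 "\<lambda>_. - C"] AE_I2)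
        (auto intro: absolutely_integrable_continuous_real)
  next
    fix M assume "\<forall>r\<in>{0<..<1}. integral {-\<theta>0..\<theta>0} (\<lambda>\<theta>. \<bar>u r \<theta>\<bar>) \<le> M"
    then show ?thesis
      by (blast intro: eventually_mono[OF eventually_at_left_real[OF zero_less_one]])
  next
    fix g :: "real \<Rightarrow> real"
    assume "g absolutely_integrable_on {-\<theta>0..\<theta>0}"
      and "AE \<theta> in lebesgue. \<theta> \<in> {-\<theta>0<..<\<theta>0} \<longrightarrow> (\<forall>r\<in>{0..<1}. g \<theta> \<le> u r \<theta>)"
    then show ?thesis
      using th0 by (intro near_bounded_if_lower_bound) auto
  qed
  then obtain M where "eventually (\<lambda>r. integral {0..2*pi} (\<lambda>\<theta>. \<bar>u r \<theta>\<bar>) \<le> M) (at_left 1)"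
    using L1_bounded_if_near_bounded th0 by force
  then have "c \<longlonglongrightarrow> c 1 - cos_coeff f 1 / pi"
    by (rule tendsto_coeff)
  then show ?thesis
    using tendsto_Abel_mean_psU by blast
qed

end
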